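(* Let $G$ be an unweighted graph (loops allowed, no parallel edges) with no isolated vertices, with adjacency matrix $A_G$ (diagonal entry $1$ at looped vertices), and let $Q_G(\mathbf{x})=\tfrac12\mathbf{x}^TA_G\mathbf{x}$. The following are equivalent: (1) $G$ is antiferromagnetic; (2) $Q_G$ is Lorentzian; (3) $\operatorname{supp}(Q_G)$ is M-convex; (4) there exist disjoint vertex sets $V_1,V_2$ with $V_1\cup V_2=V(G)$ such that $V_1$ induces a complete multipartite graph (with no loops) and $V_2$ consists of looped vertices each adjacent to all vertices of $G$.
   Context: A symmetric nonnegative matrix (or the corresponding graph) is antiferromagnetic if it has at most one positive eigenvalue, counted with multiplicity. The support $\operatorname{supp}(f)\subseteq\mathbb{N}_0^n$ of a polynomial $f$ is the set of exponent vectors of monomials with nonzero coefficient. A set $S\subseteq\mathbb{N}_0^n$ is M-convex if for all $\mathbf{a},\mathbf{b}\in S$ and every $i$ with $a_i>b_i$ there is $j$ with $a_j<b_j$ and $\mathbf{a}-\mathbf{e}_i+\mathbf{e}_j\in S$. A homogeneous polynomial $f$ with nonnegative coefficients of degree $d\ge2$ is Lorentzian if: for $d=2$, its Hessian $(\partial_i\partial_jf)_{i,j}$ has at most one positive eigenvalue; for $d>2$, every $\partial_if$ is Lorentzian and $\operatorname{supp}(f)$ is M-convex. *)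

theory Defs
  imports "Jordan_Normal_Form.Char_Poly" "HOL-Library.Poly_Mapping" "HOL-Library.Disjoint_Sets"
begin

(* Multivariate polynomials with real coefficients in variables x_0, x_1, ...
   (variables indexed by nat), represented as finitely supported maps
   from exponent vectors (nat \<Rightarrow>\<^sub>0 nat) to coefficients. *)
type_synonym mpoly = "(nat \<Rightarrow>\<^sub>0 nat) \<Rightarrow>\<^sub>0 real"

abbreviation evec :: "nat \<Rightarrow> nat \<Rightarrow>\<^sub>0 nat" where
  "evec i \<equiv> Poly_Mapping.single i 1"

definition supp :: "mpoly \<Rightarrow> (nat \<Rightarrow>\<^sub>0 nat) set" where
  "supp f = Poly_Mapping.keys f"

definition mpderiv :: "nat \<Rightarrow> mpoly \<Rightarrow> mpoly" where
  "mpderiv i f = Abs_poly_mapping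
     (\<lambda>m. of_nat (Poly_Mapping.lookup m i + 1) * Poly_Mapping.lookup f (m + evec i))"

definition mdeg :: "(nat \<Rightarrow>\<^sub>0 nat) \<Rightarrow> nat" where
  "mdeg m = (\<Sum>k\<in>Poly_Mapping.keys m. Poly_Mapping.lookup m k)"

definition homogeneous :: "nat \<Rightarrow> mpoly \<Rightarrow> bool" where
  "homogeneous d f \<longleftrightarrow> (\<forall>m\<in>supp f. mdeg m = d)"

definition nonneg_coeffs :: "mpoly \<Rightarrow> bool" where
  "nonneg_coeffs f \<longleftrightarrow> (\<forall>m. Poly_Mapping.lookup f m \<ge> 0)"

definition in_vars :: "nat \<Rightarrow> mpoly \<Rightarrow> bool" where
  "in_vars n f \<longleftrightarrow> (\<forall>m\<in>supp f. \<forall>k\<in>Poly_Mapping.keys m. k < n)"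

definition M_convex :: "(nat \<Rightarrow>\<^sub>0 nat) set \<Rightarrow> bool" where
  "M_convex S \<longleftrightarrow> (\<forall>a\<in>S. \<forall>b\<in>S. \<forall>i. Poly_Mapping.lookup a i > Poly_Mapping.lookup b i \<longrightarrow>
      (\<exists>j. Poly_Mapping.lookup a j < Poly_Mapping.lookup b j \<and> a - evec i + evec j \<in> S))"

definition num_pos_eigenvalues :: "real mat \<Rightarrow> nat" where
  "num_pos_eigenvalues A =
     (\<Sum>x\<in>{x. 0 < x \<and> poly (char_poly A) x = 0}. order x (char_poly A))"

definition at_most_one_pos_eig :: "real mat \<Rightarrow> bool" where
  "at_most_one_pos_eig A \<longleftrightarrow> num_pos_eigenvalues A \<le> 1"

(* Hessian of f (in variables x_0..x_{n-1}); for a homogeneous quadratic the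
   second partial derivatives are constants, read off at the zero monomial *)
definition hessian :: "nat \<Rightarrow> mpoly \<Rightarrow> real mat" where
  "hessian n f = mat n n (\<lambda>(i,j). Poly_Mapping.lookup (mpderiv i (mpderiv j f)) 0)"

fun lorentzian :: "nat \<Rightarrow> nat \<Rightarrow> mpoly \<Rightarrow> bool" where
  "lorentzian n 0 f = False"
| "lorentzian n (Suc 0) f = False"
| "lorentzian n (Suc (Suc 0)) f \<longleftrightarrow>
     in_vars n f \<and> homogeneous 2 f \<and> nonneg_coeffs f \<and> at_most_one_pos_eig (hessian n f)"
| "lorentzian n (Suc (Suc (Suc k))) f \<longleftrightarrow>
     in_vars n f \<and> homogeneous (Suc (Suc (Suc k))) f \<and> nonneg_coeffs f \<and>
     (\<forall>i<n. lorentzian n (Suc (Suc k)) (mpderiv i f)) \<and> M_convex (supp f)"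

(* Graphs on vertex set {0..<n}: E symmetric, loops (E v v) allowed,
   no parallel edges (E is a relation). *)
definition adj_matrix :: "nat \<Rightarrow> (nat \<Rightarrow> nat \<Rightarrow> bool) \<Rightarrow> real mat" where
  "adj_matrix n E = mat n n (\<lambda>(i,j). if E i j then 1 else 0)"

definition antiferromagnetic :: "nat \<Rightarrow> (nat \<Rightarrow> nat \<Rightarrow> bool) \<Rightarrow> bool" where
  "antiferromagnetic n E \<longleftrightarrow> at_most_one_pos_eig (adj_matrix n E)"

definition QG :: "nat \<Rightarrow> (nat \<Rightarrow> nat \<Rightarrow> bool) \<Rightarrow> mpoly" where
  "QG n E = (\<Sum>i<n. \<Sum>j<n.
      Poly_Mapping.single (evec i + evec j) ((1/2) * (adj_matrix n E $$ (i,j))))"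

definition induces_complete_multipartite :: "(nat \<Rightarrow> nat \<Rightarrow> bool) \<Rightarrow> nat set \<Rightarrow> bool" where
  "induces_complete_multipartite E V1 \<longleftrightarrow>
     (\<exists>P. partition_on V1 P \<and>
        (\<forall>u\<in>V1. \<forall>v\<in>V1. E u v \<longleftrightarrow> \<not> (\<exists>X\<in>P. u \<in> X \<and> v \<in> X)))"

end

theory Submission
  imports Defs
begin

(* Both the spectral condition (1) and the M-convexity condition (3) turn out to be equivalent to a
   local condition on G, multipartite_cone: every looped vertex is adjacent to every vertex, and
   among loopless vertices non-adjacency is transitive.  Non-adjacency is then an equivalence
   relation on the loopless vertices, and its classes are the parts in (4).

   By the spectral theorem, a real symmetric matrix has at most one positive eigenvalue iff its
   quadratic form is nonpositive on some hyperplane.  For a multipartite cone, A_G = J - B with B the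
   indicator matrix of the non-adjacency classes, so x^T A_G x = - sum over classes X of
   (sum_{i in X} x_i)^2 <= 0 on the hyperplane sum_i x_i = 0.  Conversely, each violation of the
   local condition (where the absence of isolated vertices supplies a neighbour t) yields two
   vectors spanning a plane on which the form is positive definite, and such a plane meets every
   hyperplane.  For (3), the exchange axiom between monomials x_i x_k and x_r x_s is checked by a
   case analysis, and conversely two well-chosen exchanges recover the local condition.  Finally (2)
   reduces to (1) because the Hessian of Q_G is A_G. *)

section \<open>Real symmetric matrices with at most one positive eigenvalue\<close>

lemma symmetric_mat_entry:
  assumes "A \<in> carrier_mat n n" "transpose_mat A = A" "i < n" "j < n"
  shows "A $$ (j, i) = A $$ (i, j)"
  by (metis assms index_transpose_mat(1) carrier_matD)

lemma real_symmetric_eigenvalue_real: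
  fixes A :: "real mat"
  assumes A: "A \<in> carrier_mat n n" and sym: "transpose_mat A = A"
    and ev: "eigenvalue (map_mat complex_of_real A) a"
  shows "Im a = 0"
proof -
  let ?A = "map_mat complex_of_real A"
  obtain v where v: "v \<in> carrier_vec n" and v0: "v \<noteq> 0\<^sub>v n" and Av: "?A *\<^sub>v v = a \<cdot>\<^sub>v v"
    using ev A unfolding eigenvalue_def eigenvector_def by auto
  have row: "(\<Sum>j<n. complex_of_real (A $$ (i,j)) * v $ j) = a * v $ i" if "i < n" for i
    using arg_cong[OF Av, of "\<lambda>w. w $ i"] that A v
    by (simp add: mult_mat_vec_def scalar_prod_def row_def atLeast0LessThan)
  define s where "s = (\<Sum>i<n. \<Sum>j<n. complex_of_real (A $$ (i,j)) * cnj (v $ i) * v $ j)"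
  define N where "N = (\<Sum>i<n. v $ i * cnj (v $ i))"
  have "s = (\<Sum>i<n. cnj (v $ i) * (\<Sum>j<n. complex_of_real (A $$ (i,j)) * v $ j))"
    unfolding s_def by (simp add: sum_distrib_left mult_ac)
  also have "\<dots> = (\<Sum>i<n. cnj (v $ i) * (a * v $ i))"
    by (intro sum.cong refl) (simp add: row)
  also have "\<dots> = a * N"
    unfolding N_def by (simp add: sum_distrib_left mult_ac)
  finally have s_aN: "s = a * N" .
  have "cnj s = (\<Sum>i<n. \<Sum>j<n. complex_of_real (A $$ (i,j)) * v $ i * cnj (v $ j))"
    unfolding s_def by simp
  also have "\<dots> = (\<Sum>j<n. \<Sum>i<n. complex_of_real (A $$ (i,j)) * v $ i * cnj (v $ j))"
    by (rule sum.swap)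
  also have "\<dots> = s"
    unfolding s_def using symmetric_mat_entry[OF A sym] by (intro sum.cong refl) (simp add: mult_ac)
  finally have "Im s = 0" by (metis Reals_cnj_iff complex_is_Real_iff)
  obtain i where i: "i < n" "v $ i \<noteq> 0"
    using v v0 by (metis eq_vecI index_zero_vec carrier_vecD)
  have "(\<Sum>i<n. (cmod (v $ i))\<^sup>2) > 0"
    by (rule sum_pos2[of _ i]) (use i in auto)
  moreover have "N = of_real (\<Sum>i<n. (cmod (v $ i))\<^sup>2)"
    unfolding N_def of_real_sum complex_norm_square ..
  ultimately have "Re N > 0" "Im N = 0" by simp_all
  with \<open>Im s = 0\<close> s_aN show ?thesis by simp
qed

lemma real_symmetric_char_poly_splits:
  fixes A :: "real mat"
  assumes A: "A \<in> carrier_mat n n" and sym: "transpose_mat A = A"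
  shows "\<exists>es. char_poly A = (\<Prod>e\<leftarrow>es. [:-e, 1:]) \<and> length es = n"
proof -
  let ?A = "map_mat complex_of_real A"
  have A': "?A \<in> carrier_mat n n" using A by simp
  obtain as where cp: "char_poly ?A = (\<Prod>a\<leftarrow>as. [:-a, 1:])" and len: "length as = n"
    using char_poly_factorized[OF A'] by auto
  have "Im a = 0" if "a \<in> set as" for a
  proof (rule real_symmetric_eigenvalue_real[OF A sym])
    have "poly (char_poly ?A) a = 0"
      unfolding cp using that by (simp add: poly_prod_list prod_list_zero_iff)
    thus "eigenvalue ?A a" using eigenvalue_root_char_poly[OF A'] by simp
  qed
  hence as: "as = map (complex_of_real \<circ> Re) as"
    by (intro nth_equalityI) (auto simp: complex_eq_iff)
  interpret of_real_poly: map_poly_inj_idom_hom complex_of_real ..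
  have "map_poly complex_of_real (char_poly A) = (\<Prod>a\<leftarrow>as. [:-a, 1:])"
    unfolding cp[symmetric] by (rule of_real_hom.char_poly_hom[OF A, symmetric])
  also have "\<dots> = map_poly complex_of_real (\<Prod>e\<leftarrow>map Re as. [:-e, 1:])"
    by (subst as) (simp add: of_real_poly.hom_prod_list o_def)
  finally have "char_poly A = (\<Prod>e\<leftarrow>map Re as. [:-e, 1:])"
    by (rule of_real_poly.eq_iff[THEN iffD1])
  thus ?thesis using len by (intro exI[of _ "map Re as"]) simp
qed

lemma householder_reflection_exists:
  fixes v :: "real vec"
  assumes v: "v \<in> carrier_vec n" and n: "0 < n" and unit: "v \<bullet> v = 1"
  shows "\<exists>H \<in> carrier_mat n n. transpose_mat H = H \<and> H * H = 1\<^sub>m n \<and> col H 0 = v"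
proof -
  define u where "u i = v $ i - of_bool (i = 0)" for i
  define uu where "uu = (\<Sum>k<n. u k * u k)"
  define c where "c = (if uu = 0 then 0 else 2 / uu)"
  \<comment> \<open>the reflection in the hyperplane orthogonal to u = v - e_0 (the identity if v = e_0)\<close>
  define H where "H = mat n n (\<lambda>(i,j). of_bool (i = j) - c * u i * u j)"
  have cuu: "c * c * uu = 2 * c" unfolding c_def by simp
  have "(\<Sum>k<n. (of_bool (i = k) - c * u i * u k) * (of_bool (k = j) - c * u k * u j))
     = of_bool (i = j)" if "i < n" "j < n" for i j
  proof -
    have "(\<Sum>k<n. (of_bool (i = k) - c * u i * u k) * (of_bool (k = j) - c * u k * u j))
      = (\<Sum>k<n. of_bool (i = k) * of_bool (k = j)) - (\<Sum>k<n. of_bool (i = k) * (c * u k * u j))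
        - (\<Sum>k<n. of_bool (k = j) * (c * u i * u k)) + c * c * uu * u i * u j"
      unfolding uu_def by (simp add: algebra_simps sum.distrib sum_subtractf sum_distrib_left)
    also have "\<dots> = of_bool (i = j) - 2 * c * u i * u j + c * c * uu * u i * u j"
      using that by simp
    finally show ?thesis unfolding cuu by simp
  qed
  hence HH: "H * H = 1\<^sub>m n"
    by (intro eq_matI) (auto simp: H_def scalar_prod_def atLeast0LessThan)
  have "uu = 2 - 2 * v $ 0"
  proof -
    have sq: "u k * u k = v $ k * v $ k - 2 * (of_bool (k = 0) * v $ k) + of_bool (k = 0) * 1" for k
      by (cases "k = 0") (simp_all add: u_def algebra_simps)
    have "uu = (\<Sum>k<n. v $ k * v $ k) - 2 * (\<Sum>k<n. of_bool (k = 0) * v $ k)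
        + (\<Sum>k<n. of_bool (k = 0) * 1)"
      unfolding uu_def sq sum.distrib sum_subtractf sum_distrib_left ..
    also have "(\<Sum>k<n. v $ k * v $ k) = 1" using unit v by (simp add: scalar_prod_def atLeast0LessThan)
    finally show ?thesis using n by simp
  qed
  hence "c * u 0 = -1 \<or> (\<forall>k<n. u k = 0)"
  proof (cases "uu = 0")
    case True
    hence "\<forall>k\<in>{..<n}. u k * u k = 0" unfolding uu_def by (subst (asm) sum_nonneg_eq_0_iff) auto
    thus ?thesis by simp
  next
    case False
    with \<open>uu = 2 - 2 * v $ 0\<close> show ?thesis by (simp add: c_def u_def field_simps)
  qed
  hence "c * u i * u 0 = - u i" if "i < n" for i
    using that by (metis mult.commute mult.left_commute mult_minus1_right mult_zero_left)
  hence "col H 0 = v" using v n by (intro eq_vecI) (auto simp: H_def u_def)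
  moreover have "transpose_mat H = H" unfolding H_def by (rule eq_matI) (auto simp: mult_ac)
  moreover have "H \<in> carrier_mat n n" unfolding H_def by simp
  ultimately show ?thesis using HH by blast
qed

lemma symmetric_deflation:
  fixes A :: "real mat"
  assumes A: "A \<in> carrier_mat n n" and n: "n = Suc m" and sym: "transpose_mat A = A"
    and e: "eigenvalue A e"
  obtains H B where "H \<in> carrier_mat n n" "transpose_mat H = H" "H * H = 1\<^sub>m n"
    "B \<in> carrier_mat m m" "transpose_mat B = B"
    "H * A * H = four_block_mat (mat 1 1 (\<lambda>_. e)) (0\<^sub>m 1 m) (0\<^sub>m m 1) B"
proof -
  obtain w where w: "w \<in> carrier_vec n" "w \<noteq> 0\<^sub>v n" and Aw: "A *\<^sub>v w = e \<cdot>\<^sub>v w"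
    using find_eigenvector[OF A e] A unfolding eigenvector_def by auto
  obtain i where i: "i < n" "w $ i \<noteq> 0"
    using w by (metis eq_vecI index_zero_vec carrier_vecD)
  have "w \<bullet> w > 0" unfolding scalar_prod_def using w
    by (intro sum_pos2[of _ i]) (use i in auto)
  define v where "v = (1 / sqrt (w \<bullet> w)) \<cdot>\<^sub>v w"
  have v: "v \<in> carrier_vec n" "v \<bullet> v = 1" "A *\<^sub>v v = e \<cdot>\<^sub>v v"
    unfolding v_def using w \<open>w \<bullet> w > 0\<close> A Aw
    by (simp_all add: smult_scalar_prod_distrib scalar_prod_smult_distrib mult_mat_vec
        smult_smult_assoc mult.commute)
  obtain H where H: "H \<in> carrier_mat n n" and HT: "transpose_mat H = H"
    and HH: "H * H = 1\<^sub>m n" and Hv: "col H 0 = v"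
    using householder_reflection_exists[OF v(1) _ v(2)] n by auto
  define A' where "A' = H * A * H"
  have A': "A' \<in> carrier_mat n n" unfolding A'_def using H A by simp
  have "transpose_mat A' = transpose_mat H * (transpose_mat A * transpose_mat H)"
    unfolding A'_def using H A by (simp add: transpose_mult[of _ n n _ n])
  hence symA': "transpose_mat A' = A'"
    unfolding A'_def using H A HT sym by (simp add: assoc_mult_mat[of _ n n _ n _ n])
  have "col A' 0 = (H * A) *\<^sub>v col H 0"
    unfolding A'_def by (rule col_mult2[of _ n n]) (use H A n in auto)
  also have "\<dots> = H *\<^sub>v (A *\<^sub>v v)"
    using H A v by (simp add: Hv)
  also have "\<dots> = e \<cdot>\<^sub>v (H *\<^sub>v col H 0)"
    using H v by (simp add: mult_mat_vec Hv)
  also have "H *\<^sub>v col H 0 = col (H * H) 0"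
    by (rule col_mult2[symmetric]) (use H n in auto)
  finally have colA': "col A' 0 = e \<cdot>\<^sub>v unit_vec n 0" unfolding HH using n by simp
  have A'_0: "A' $$ (k, 0) = (if k = 0 then e else 0)" "A' $$ (0, k) = (if k = 0 then e else 0)"
    if "k < n" for k
    using arg_cong[OF colA', of "\<lambda>x. x $ k"] symmetric_mat_entry[OF A' symA' that, of 0] that A' n
    by auto
  define B where "B = mat m m (\<lambda>(i,j). A' $$ (Suc i, Suc j))"
  have "A' = four_block_mat (mat 1 1 (\<lambda>_. e)) (0\<^sub>m 1 m) (0\<^sub>m m 1) B"
    by (rule eq_matI) (use A' A'_0 n in \<open>auto simp: B_def\<close>)
  moreover have "transpose_mat B = B"
    unfolding B_def using symmetric_mat_entry[OF A' symA'] n by (intro eq_matI) auto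
  moreover have "B \<in> carrier_mat m m" unfolding B_def by simp
  ultimately show ?thesis using that[OF H HT HH] unfolding A'_def by blast
qed

lemma block_diag_conj:
  fixes C B Q :: "'a::comm_ring_1 mat"
  assumes C: "C \<in> carrier_mat 1 1" and B: "B \<in> carrier_mat m m" and Q: "Q \<in> carrier_mat m m"
  shows "transpose_mat (four_block_mat (1\<^sub>m 1) (0\<^sub>m 1 m) (0\<^sub>m m 1) Q)
      * four_block_mat C (0\<^sub>m 1 m) (0\<^sub>m m 1) B * four_block_mat (1\<^sub>m 1) (0\<^sub>m 1 m) (0\<^sub>m m 1) Q
    = four_block_mat C (0\<^sub>m 1 m) (0\<^sub>m m 1) (transpose_mat Q * B * Q)"
proof -
  have T: "transpose_mat (four_block_mat (1\<^sub>m 1) (0\<^sub>m 1 m) (0\<^sub>m m 1) Q)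
      = four_block_mat (1\<^sub>m 1) (0\<^sub>m 1 m) (0\<^sub>m m 1) (transpose_mat Q)"
    by (rule trans[OF transpose_four_block_mat]) (use Q in auto)
  show ?thesis unfolding T
    by (rule trans[OF arg_cong2[of _ _ _ _ "(*)", OF mult_four_block_mat refl]],
        (use Q B C in auto)[8], rule trans[OF mult_four_block_mat]) (use Q B C in auto)
qed

theorem real_symmetric_orthogonally_diagonalizable:
  fixes A :: "real mat"
  assumes "A \<in> carrier_mat n n" "transpose_mat A = A" "char_poly A = (\<Prod>e\<leftarrow>es. [:-e, 1:])"
  shows "\<exists>P \<in> carrier_mat n n. transpose_mat P * P = 1\<^sub>m n \<and>
           transpose_mat P * A * P = mat n n (\<lambda>(i,j). if i = j then es ! i else 0)"
  using assms
proof (induction es arbitrary: n A)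
  case Nil
  with degree_monic_char_poly[OF Nil(1)] have "n = 0" by simp
  thus ?case by (intro bexI[of _ "1\<^sub>m n"]) (auto intro!: eq_matI)
next
  case (Cons e es n A)
  note A = Cons.prems(1) and sym = Cons.prems(2)
  have cp: "char_poly A = [:-e, 1:] * (\<Prod>e\<leftarrow>es. [:-e, 1:])" using Cons.prems(3) by simp
  have "monic (\<Prod>e\<leftarrow>es. [:-e, 1:])" by (rule monic_prod_list) auto
  hence "degree (char_poly A) = Suc (degree (\<Prod>e\<leftarrow>es. [:-e, 1:]))"
    unfolding cp by (subst degree_mult_eq) auto
  with degree_monic_char_poly[OF A] obtain m where n: "n = Suc m" by (cases n) auto
  have ev: "eigenvalue A e" unfolding eigenvalue_root_char_poly[OF A] cp by simp
  obtain H B where H: "H \<in> carrier_mat n n" "transpose_mat H = H" "H * H = 1\<^sub>m n"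
    and B: "B \<in> carrier_mat m m" "transpose_mat B = B"
    and HAH: "H * A * H = four_block_mat (mat 1 1 (\<lambda>_. e)) (0\<^sub>m 1 m) (0\<^sub>m m 1) B"
    by (rule symmetric_deflation[OF A n sym ev])
  have "similar_mat (H * A * H) A"
    unfolding similar_mat_def similar_mat_wit_def using A H by (intro exI[of _ H]) auto
  hence "char_poly A = char_poly (H * A * H)" by (simp add: char_poly_similar)
  also have "\<dots> = char_poly (mat 1 1 (\<lambda>_. e)) * char_poly B"
    unfolding HAH by (rule char_poly_four_block_zeros_col) (use B in auto)
  also have "char_poly (mat 1 1 (\<lambda>_. e)) = [:-e, 1:]"
    by (simp add: char_poly_defs det_def sign_def)
  finally have "char_poly B = (\<Prod>e\<leftarrow>es. [:-e, 1:])"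
    unfolding cp by (metis mult_cancel_left pCons_eq_0_iff zero_neq_one)
  with Cons.IH[OF B] obtain Q where Q: "Q \<in> carrier_mat m m" "transpose_mat Q * Q = 1\<^sub>m m"
    and QBQ: "transpose_mat Q * B * Q = mat m m (\<lambda>(i,j). if i = j then es ! i else 0)"
    by blast
  define F where "F = four_block_mat (1\<^sub>m 1) (0\<^sub>m 1 m) (0\<^sub>m m 1) Q"
  have F: "F \<in> carrier_mat n n" unfolding F_def n using Q by auto
  define P where "P = H * F"
  have P: "P \<in> carrier_mat n n" unfolding P_def using H F by simp
  have PT: "transpose_mat P = transpose_mat F * H"
    unfolding P_def using H F by (simp add: transpose_mult[of _ n n])
  have "transpose_mat P * P = transpose_mat F * (H * H) * F"
    unfolding PT unfolding P_def using H(1) F by (simp add: assoc_mult_mat[of _ n n _ n _ n])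
  also have "H * H = four_block_mat (1\<^sub>m 1) (0\<^sub>m 1 m) (0\<^sub>m m 1) (1\<^sub>m m)"
    unfolding H(3) n by (simp add: four_block_one_mat)
  also have "transpose_mat F * \<dots> * F = 1\<^sub>m n"
    unfolding F_def block_diag_conj[OF one_carrier_mat one_carrier_mat Q(1)] using Q
    by (simp add: n four_block_one_mat)
  finally have "transpose_mat P * P = 1\<^sub>m n" .
  moreover have "transpose_mat P * A * P = transpose_mat F * (H * A * H) * F"
    unfolding PT unfolding P_def using H(1) F A by (simp add: assoc_mult_mat[of _ n n _ n _ n])
  moreover have "\<dots> = mat n n (\<lambda>(i,j). if i = j then (e # es) ! i else 0)"
    unfolding HAH F_def block_diag_conj[OF mat_carrier B(1) Q(1)] QBQ by (rule eq_matI) (auto simp: n)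
  ultimately show ?case using P by auto
qed

lemma num_pos_eigenvalues_linear_factors:
  fixes A :: "real mat"
  assumes cp: "char_poly A = (\<Prod>e\<leftarrow>es. [:-e, 1:])"
  shows "num_pos_eigenvalues A = length (filter (\<lambda>e. e > 0) es)"
proof -
  let ?S = "{x. x \<in> set es \<and> 0 < x}"
  have roots: "{x. 0 < x \<and> poly (char_poly A) x = 0} = ?S"
    unfolding cp by (auto simp: poly_prod_list)
  have "order x (char_poly A) = count_list es x" for x
    unfolding cp by (subst order_prod_list) (auto simp: order_linear' o_def, induction es, auto)
  also have "count_list es x = count_list (filter (\<lambda>e. e > 0) es) x" if "0 < x" for x
    using that by (induction es) auto
  finally have "num_pos_eigenvalues A = (\<Sum>x\<in>?S. count_list (filter (\<lambda>e. e > 0) es) x)"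
    unfolding num_pos_eigenvalues_def roots by simp
  also have "\<dots> = length (filter (\<lambda>e. e > 0) es)"
    by (rule sum_count_set) auto
  finally show ?thesis .
qed

definition bilin_form :: "real mat \<Rightarrow> nat \<Rightarrow> (nat \<Rightarrow> real) \<Rightarrow> (nat \<Rightarrow> real) \<Rightarrow> real" where
  "bilin_form A n f g = (\<Sum>i<n. \<Sum>j<n. A $$ (i,j) * f i * g j)"

abbreviation quad_form :: "real mat \<Rightarrow> nat \<Rightarrow> (nat \<Rightarrow> real) \<Rightarrow> real" where
  "quad_form A n f \<equiv> bilin_form A n f f"

definition nonpos_on_hyperplane :: "real mat \<Rightarrow> nat \<Rightarrow> bool" where
  "nonpos_on_hyperplane A n \<longleftrightarrow> (\<exists>w. \<forall>f. (\<Sum>i<n. w i * f i) = 0 \<longrightarrow> quad_form A n f \<le> 0)"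

lemma bilin_form_scalar_prod:
  assumes "A \<in> carrier_mat n n" "x \<in> carrier_vec n" "y \<in> carrier_vec n"
  shows "x \<bullet> (A *\<^sub>v y) = bilin_form A n (($) x) (($) y)"
  unfolding bilin_form_def using assms
  by (simp add: scalar_prod_def mult_mat_vec_def row_def atLeast0LessThan sum_distrib_left mult_ac)

lemma bilin_form_diagonalized:
  assumes P: "P \<in> carrier_mat n n" and A: "A \<in> carrier_mat n n"
    and PAP: "transpose_mat P * A * P = mat n n (\<lambda>(i,j). if i = j then es ! i else 0)"
    and y: "y \<in> carrier_vec n" and z: "z \<in> carrier_vec n"
  shows "bilin_form A n (($) (P *\<^sub>v y)) (($) (P *\<^sub>v z)) = (\<Sum>k<n. es ! k * y $ k * z $ k)"
proof -
  have "bilin_form A n (($) (P *\<^sub>v y)) (($) (P *\<^sub>v z)) = (P *\<^sub>v y) \<bullet> (A *\<^sub>v (P *\<^sub>v z))"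
    using P A y z by (simp add: bilin_form_scalar_prod)
  also have "\<dots> = y \<bullet> ((transpose_mat P * A * P) *\<^sub>v z)"
    using transpose_vec_mult_scalar[of "transpose_mat P" n n "A *\<^sub>v (P *\<^sub>v z)" y] P A y z
    by (simp add: assoc_mult_mat_vec[of _ n n _ n])
  also have "\<dots> = (\<Sum>k<n. es ! k * y $ k * z $ k)"
    unfolding PAP using y z
    by (simp add: scalar_prod_def mult_mat_vec_def atLeast0LessThan if_distrib[of "(*) _"] mult_ac
        cong: if_cong)
  finally show ?thesis .
qed

lemma bilin_form_commute:
  assumes "A \<in> carrier_mat n n" "transpose_mat A = A"
  shows "bilin_form A n g f = bilin_form A n f g"
proof -
  have "bilin_form A n g f = (\<Sum>j<n. \<Sum>i<n. A $$ (i,j) * g i * f j)"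
    unfolding bilin_form_def by (rule sum.swap)
  also have "\<dots> = bilin_form A n f g"
    unfolding bilin_form_def using symmetric_mat_entry[OF assms]
    by (intro sum.cong refl) (simp add: mult_ac)
  finally show ?thesis .
qed

lemma quad_form_lin_comb:
  assumes "A \<in> carrier_mat n n" "transpose_mat A = A"
  shows "quad_form A n (\<lambda>k. a * X k + b * Y k)
    = a\<^sup>2 * quad_form A n X + 2 * a * b * bilin_form A n X Y + b\<^sup>2 * quad_form A n Y"
proof -
  have "quad_form A n (\<lambda>k. a * X k + b * Y k)
    = a\<^sup>2 * quad_form A n X + a * b * bilin_form A n X Y + a * b * bilin_form A n Y X
      + b\<^sup>2 * quad_form A n Y"
    unfolding bilin_form_def
    by (simp add: algebra_simps power2_eq_square sum.distrib sum_distrib_left)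
  thus ?thesis using bilin_form_commute[OF assms, of Y X] by simp
qed

lemma binary_quadratic_form_pos:
  fixes p q r a b :: real
  assumes "p > 0" "p * r > q\<^sup>2" "a \<noteq> 0 \<or> b \<noteq> 0"
  shows "a\<^sup>2 * p + 2 * a * b * q + b\<^sup>2 * r > 0"
proof -
  have "p * (a\<^sup>2 * p + 2 * a * b * q + b\<^sup>2 * r) = (p * a + q * b)\<^sup>2 + (p * r - q\<^sup>2) * b\<^sup>2"
    by (simp add: algebra_simps power2_eq_square)
  also have "\<dots> > 0"
  proof (cases "b = 0")
    case True
    with assms show ?thesis by simp
  next
    case False
    with assms have "(p * r - q\<^sup>2) * b\<^sup>2 > 0" by simp
    thus ?thesis by (simp add: add_nonneg_pos)
  qed
  finally show ?thesis using \<open>p > 0\<close> by (simp add: zero_less_mult_iff)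
qed

lemma not_nonpos_on_hyperplane:
  assumes A: "A \<in> carrier_mat n n" "transpose_mat A = A"
    and X: "quad_form A n X > 0" and XY: "quad_form A n X * quad_form A n Y > (bilin_form A n X Y)\<^sup>2"
  shows "\<not> nonpos_on_hyperplane A n"
proof
  assume "nonpos_on_hyperplane A n"
  then obtain w where w: "\<And>f. (\<Sum>i<n. w i * f i) = 0 \<Longrightarrow> quad_form A n f \<le> 0"
    unfolding nonpos_on_hyperplane_def by blast
  have pos: "quad_form A n (\<lambda>k. a * X k + b * Y k) > 0" if "a \<noteq> 0 \<or> b \<noteq> 0" for a b
    unfolding quad_form_lin_comb[OF A] using binary_quadratic_form_pos[OF X XY that] by simp
  define sx where "sx = (\<Sum>i<n. w i * X i)"
  define sy where "sy = (\<Sum>i<n. w i * Y i)"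
  have lin: "(\<Sum>i<n. w i * (a * X i + b * Y i)) = a * sx + b * sy" for a b
    unfolding sx_def sy_def by (simp add: algebra_simps sum.distrib sum_distrib_left)
  \<comment> \<open>the plane spanned by X and Y meets every hyperplane\<close>
  obtain a b where ab: "a \<noteq> 0 \<or> b \<noteq> 0" "a * sx + b * sy = 0"
  proof (cases "sx = 0 \<and> sy = 0")
    case True
    thus ?thesis using that[of 1 0] by simp
  next
    case False
    thus ?thesis using that[of sy "- sx"] by (auto simp: mult.commute)
  qed
  have "quad_form A n (\<lambda>k. a * X k + b * Y k) \<le> 0"
    using w[of "\<lambda>k. a * X k + b * Y k"] lin ab(2) by simp
  with pos[OF ab(1)] show False by simp
qed

lemma diagonalized_nonpos_on_hyperplane:
  fixes A P :: "real mat"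
  assumes P: "P \<in> carrier_mat n n" "transpose_mat P * P = 1\<^sub>m n" and A: "A \<in> carrier_mat n n"
    and PAP: "transpose_mat P * A * P = mat n n (\<lambda>(i,j). if i = j then es ! i else 0)"
    and k0: "\<And>k. k < n \<Longrightarrow> es ! k > 0 \<Longrightarrow> k = k0"
  shows "nonpos_on_hyperplane A n"
  unfolding nonpos_on_hyperplane_def
proof (intro exI allI impI)
  fix f assume f: "(\<Sum>i<n. P $$ (i, k0) * f i) = 0"
  define y where "y = transpose_mat P *\<^sub>v vec n f"
  have y: "y \<in> carrier_vec n" using P unfolding y_def by simp
  have "P *\<^sub>v y = (P * transpose_mat P) *\<^sub>v vec n f"
    using P unfolding y_def by simp
  also have "P * transpose_mat P = 1\<^sub>m n"
    by (rule mat_mult_left_right_inverse[OF _ P]) (use P in simp)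
  finally have "P *\<^sub>v y = vec n f" by simp
  hence "quad_form A n f = quad_form A n (($) (P *\<^sub>v y))"
    unfolding bilin_form_def by (intro sum.cong refl) simp_all
  also have "\<dots> = (\<Sum>k<n. es ! k * y $ k * y $ k)"
    by (rule bilin_form_diagonalized[OF P(1) A PAP y y])
  also have "\<dots> \<le> 0"
  proof (intro sum_nonpos)
    fix k assume "k \<in> {..<n}"
    moreover have "y $ k0 = 0" if "k0 < n"
      using f P that unfolding y_def by (simp add: scalar_prod_def atLeast0LessThan mult.commute)
    ultimately show "es ! k * y $ k * y $ k \<le> 0"
      using k0[of k] by (cases "es ! k > 0") (auto simp: mult_nonpos_nonneg mult.assoc)
  qed
  finally show "quad_form A n f \<le> 0" .
qed

lemma diagonalized_not_nonpos_on_hyperplane: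
  fixes A P :: "real mat"
  assumes P: "P \<in> carrier_mat n n" and A: "A \<in> carrier_mat n n" "transpose_mat A = A"
    and PAP: "transpose_mat P * A * P = mat n n (\<lambda>(i,j). if i = j then es ! i else 0)"
    and ij: "i < n" "j < n" "i \<noteq> j" "es ! i > 0" "es ! j > 0"
  shows "\<not> nonpos_on_hyperplane A n"
proof -
  have "bilin_form A n (($) (P *\<^sub>v unit_vec n i')) (($) (P *\<^sub>v unit_vec n j'))
      = (if i' = j' then es ! i' else 0)" if "i' < n" "j' < n" for i' j'
  proof -
    have "bilin_form A n (($) (P *\<^sub>v unit_vec n i')) (($) (P *\<^sub>v unit_vec n j'))
        = (\<Sum>k<n. if k = i' \<and> k = j' then es ! k else 0)"
      unfolding bilin_form_diagonalized[OF P A(1) PAP unit_vec_carrier unit_vec_carrier]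
      by (intro sum.cong refl) (auto simp: unit_vec_def)
    thus ?thesis using that by (cases "i' = j'") (auto intro!: sum.neutral)
  qed
  thus ?thesis
    by (intro not_nonpos_on_hyperplane[OF A, where X = "($) (P *\<^sub>v unit_vec n i)"
        and Y = "($) (P *\<^sub>v unit_vec n j)"]) (use ij in simp_all)
qed

lemma at_most_one_pos_eig_iff_nonpos_on_hyperplane:
  fixes A :: "real mat"
  assumes A: "A \<in> carrier_mat n n" and sym: "transpose_mat A = A"
  shows "at_most_one_pos_eig A \<longleftrightarrow> nonpos_on_hyperplane A n"
proof -
  obtain es where cp: "char_poly A = (\<Prod>e\<leftarrow>es. [:-e, 1:])" and len: "length es = n"
    using real_symmetric_char_poly_splits[OF A sym] by blast
  obtain P where P: "P \<in> carrier_mat n n" "transpose_mat P * P = 1\<^sub>m n"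
    and PAP: "transpose_mat P * A * P = mat n n (\<lambda>(i,j). if i = j then es ! i else 0)"
    using real_symmetric_orthogonally_diagonalizable[OF A sym cp] by blast
  have "at_most_one_pos_eig A \<longleftrightarrow> card {k. k < n \<and> es ! k > 0} \<le> Suc 0"
    unfolding at_most_one_pos_eig_def num_pos_eigenvalues_linear_factors[OF cp]
      length_filter_conv_card len by simp
  also have "\<dots> \<longleftrightarrow> (\<forall>k k'. k < n \<longrightarrow> es ! k > 0 \<longrightarrow> k' < n \<longrightarrow> es ! k' > 0 \<longrightarrow> k = k')"
    using card_le_Suc0_iff_eq[of "{k. k < n \<and> es ! k > 0}"] by auto
  finally have pos: "at_most_one_pos_eig A \<longleftrightarrow>
      (\<forall>k k'. k < n \<longrightarrow> es ! k > 0 \<longrightarrow> k' < n \<longrightarrow> es ! k' > 0 \<longrightarrow> k = k')" .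
  show ?thesis
  proof
    assume "at_most_one_pos_eig A"
    hence uniq: "k = k'" if "k < n" "es ! k > 0" "k' < n" "es ! k' > 0" for k k'
      using pos that by blast
    obtain k0 where "\<And>k. k < n \<Longrightarrow> es ! k > 0 \<Longrightarrow> k = k0"
    proof (cases "\<exists>k<n. es ! k > 0")
      case True
      then obtain k0 where "k0 < n" "es ! k0 > 0" by blast
      with uniq show ?thesis by (intro that[of k0]) simp
    next
      case False
      thus ?thesis by (intro that) simp
    qed
    thus "nonpos_on_hyperplane A n" by (rule diagonalized_nonpos_on_hyperplane[OF P A PAP])
  next
    assume "nonpos_on_hyperplane A n"
    thus "at_most_one_pos_eig A"
      using diagonalized_not_nonpos_on_hyperplane[OF P(1) A sym PAP] pos by blast
  qed
qed

section \<open>Multipartite cones\<close>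

definition nonadj_rel :: "(nat \<Rightarrow> nat \<Rightarrow> bool) \<Rightarrow> nat set \<Rightarrow> nat rel" where
  "nonadj_rel E V = {(u, v). u \<in> V \<and> v \<in> V \<and> \<not> E u v}"

lemma induces_complete_multipartite_iff_equiv:
  "induces_complete_multipartite E V \<longleftrightarrow> equiv V (nonadj_rel E V)"
proof
  assume "induces_complete_multipartite E V"
  then obtain P where P: "partition_on V P"
    and adj: "\<forall>u\<in>V. \<forall>v\<in>V. E u v \<longleftrightarrow> \<not> (\<exists>X\<in>P. u \<in> X \<and> v \<in> X)"
    unfolding induces_complete_multipartite_def by blast
  have "nonadj_rel E V = {(u, v). \<exists>X\<in>P. u \<in> X \<and> v \<in> X}"
    using adj partition_onD1[OF P] unfolding nonadj_rel_def by blast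
  thus "equiv V (nonadj_rel E V)" using equiv_partition_on[OF P] by simp
next
  assume R: "equiv V (nonadj_rel E V)"
  have "(\<exists>X\<in>V // nonadj_rel E V. u \<in> X \<and> v \<in> X) \<longleftrightarrow> (u, v) \<in> nonadj_rel E V"
    if "u \<in> V" for u v
  proof
    assume "\<exists>X\<in>V // nonadj_rel E V. u \<in> X \<and> v \<in> X"
    then obtain x where "(x, u) \<in> nonadj_rel E V" "(x, v) \<in> nonadj_rel E V"
      by (auto elim: quotientE)
    thus "(u, v) \<in> nonadj_rel E V" using R by (meson equivE symE transE)
  next
    assume "(u, v) \<in> nonadj_rel E V"
    thus "\<exists>X\<in>V // nonadj_rel E V. u \<in> X \<and> v \<in> X"
      using equiv_class_self[OF R that] quotientI[OF that] by blast
  qed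
  hence "E u v \<longleftrightarrow> \<not> (\<exists>X\<in>V // nonadj_rel E V. u \<in> X \<and> v \<in> X)" if "u \<in> V" "v \<in> V" for u v
    using that unfolding nonadj_rel_def by blast
  thus "induces_complete_multipartite E V"
    unfolding induces_complete_multipartite_def using partition_on_quotient[OF R] by blast
qed

definition multipartite_cone :: "nat \<Rightarrow> (nat \<Rightarrow> nat \<Rightarrow> bool) \<Rightarrow> bool" where
  "multipartite_cone n E \<longleftrightarrow>
     (\<forall>v<n. E v v \<longrightarrow> (\<forall>u<n. E v u)) \<and>
     (\<forall>c<n. \<forall>a<n. \<forall>b<n. \<not> E c c \<longrightarrow> \<not> E a a \<longrightarrow> \<not> E b b \<longrightarrow> \<not> E c a \<longrightarrow> \<not> E c b \<longrightarrow> \<not> E a b)"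

lemma multipartite_coneD:
  assumes "multipartite_cone n E"
  shows multipartite_cone_loop_universal: "\<And>v u. v < n \<Longrightarrow> E v v \<Longrightarrow> u < n \<Longrightarrow> E v u"
    and multipartite_cone_nonadj_trans: "\<And>c a b. c < n \<Longrightarrow> a < n \<Longrightarrow> b < n \<Longrightarrow>
      \<not> E c c \<Longrightarrow> \<not> E a a \<Longrightarrow> \<not> E b b \<Longrightarrow> \<not> E c a \<Longrightarrow> \<not> E c b \<Longrightarrow> \<not> E a b"
  using assms unfolding multipartite_cone_def by blast+

lemma multipartite_cone_equiv_loopless:
  assumes sym: "\<And>u v. u < n \<Longrightarrow> v < n \<Longrightarrow> E u v = E v u" and cone: "multipartite_cone n E"
  shows "equiv {v. v < n \<and> \<not> E v v} (nonadj_rel E {v. v < n \<and> \<not> E v v})"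
proof (rule equivI)
  show "sym (nonadj_rel E {v. v < n \<and> \<not> E v v})"
    using sym unfolding nonadj_rel_def sym_def by auto
  show "trans (nonadj_rel E {v. v < n \<and> \<not> E v v})"
  proof (rule transI)
    fix a c b
    assume "(a, c) \<in> nonadj_rel E {v. v < n \<and> \<not> E v v}" "(c, b) \<in> nonadj_rel E {v. v < n \<and> \<not> E v v}"
    moreover from this have "\<not> E a b"
      using multipartite_cone_nonadj_trans[OF cone, of c a b] sym[of a c] by (simp add: nonadj_rel_def)
    ultimately show "(a, b) \<in> nonadj_rel E {v. v < n \<and> \<not> E v v}"
      by (simp add: nonadj_rel_def)
  qed
qed (auto simp: nonadj_rel_def refl_on_def)

lemma multipartite_cone_iff_partition:
  assumes sym: "\<And>u v. u < n \<Longrightarrow> v < n \<Longrightarrow> E u v = E v u"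
  shows "multipartite_cone n E \<longleftrightarrow>
    (\<exists>V1 V2. V1 \<inter> V2 = {} \<and> V1 \<union> V2 = {0..<n} \<and> induces_complete_multipartite E V1
       \<and> (\<forall>v\<in>V2. E v v \<and> (\<forall>u<n. E v u)))"
proof
  assume cone: "multipartite_cone n E"
  let ?V1 = "{v. v < n \<and> \<not> E v v}" and ?V2 = "{v. v < n \<and> E v v}"
  have "?V1 \<inter> ?V2 = {}" "?V1 \<union> ?V2 = {0..<n}" by auto
  moreover have "induces_complete_multipartite E ?V1"
    unfolding induces_complete_multipartite_iff_equiv by (rule multipartite_cone_equiv_loopless[OF sym cone])
  moreover have "\<forall>v\<in>?V2. E v v \<and> (\<forall>u<n. E v u)"
    using multipartite_cone_loop_universal[OF cone] by blast
  ultimately show "\<exists>V1 V2. V1 \<inter> V2 = {} \<and> V1 \<union> V2 = {0..<n} \<and> induces_complete_multipartite E V1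
       \<and> (\<forall>v\<in>V2. E v v \<and> (\<forall>u<n. E v u))"
    by blast
next
  assume "\<exists>V1 V2. V1 \<inter> V2 = {} \<and> V1 \<union> V2 = {0..<n} \<and> induces_complete_multipartite E V1
       \<and> (\<forall>v\<in>V2. E v v \<and> (\<forall>u<n. E v u))"
  then obtain V1 V2 where V: "V1 \<inter> V2 = {}" "V1 \<union> V2 = {0..<n}"
    and R: "equiv V1 (nonadj_rel E V1)" and V2: "\<forall>v\<in>V2. E v v \<and> (\<forall>u<n. E v u)"
    unfolding induces_complete_multipartite_iff_equiv by blast
  have loopless: "\<not> E v v" if "v \<in> V1" for v
    using R that unfolding equiv_def refl_on_def nonadj_rel_def by blast
  have V1: "v \<in> V1" if "v < n" "\<not> E v v" for v
    using V(2) V2 that by auto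
  show "multipartite_cone n E"
    unfolding multipartite_cone_def
  proof (intro conjI allI impI)
    fix v u assume v: "v < n" "E v v" and "u < n"
    have "v \<in> V2" using V(2) loopless v by (metis UnE atLeastLessThan_iff zero_le)
    thus "E v u" using V2 \<open>u < n\<close> by blast
  next
    fix c a b assume "c < n" "a < n" "b < n" "\<not> E c c" "\<not> E a a" "\<not> E b b" "\<not> E c a" "\<not> E c b"
    hence "(a, c) \<in> nonadj_rel E V1" "(c, b) \<in> nonadj_rel E V1"
      using V1 sym unfolding nonadj_rel_def by auto
    hence "(a, b) \<in> nonadj_rel E V1" using R by (meson equivE transE)
    thus "\<not> E a b" unfolding nonadj_rel_def by simp
  qed
qed

section \<open>The support of Q_G\<close>

lemma lookup_evec_pair:
  "Poly_Mapping.lookup (evec x + evec y) z = (if x = z then 1 else 0) + (if y = z then 1 else 0)"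
  by (simp add: lookup_add lookup_single when_def)

lemma evec_pair_eq_iff:
  "evec p + evec q = evec r + evec s \<longleftrightarrow> (p = r \<and> q = s) \<or> (p = s \<and> q = r)"
proof
  assume eq: "evec p + evec q = evec r + evec s"
  have "(if p = z then 1 else 0) + (if q = z then 1 else 0)
      = ((if r = z then 1 else 0) + (if s = z then 1 else 0) :: nat)" for z
    using arg_cong[OF eq, of "\<lambda>m. Poly_Mapping.lookup m z"] by (simp only: lookup_evec_pair)
  from this[of p] this[of q] this[of r] this[of s] show "(p = r \<and> q = s) \<or> (p = s \<and> q = r)"
    by (auto split: if_splits simp del: One_nat_def)
qed (auto simp: add.commute)

lemma lookup_QG:
  "Poly_Mapping.lookup (QG n E) m =
     (\<Sum>i<n. \<Sum>j<n. if evec i + evec j = m then (1/2) * adj_matrix n E $$ (i,j) else 0)"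
  unfolding QG_def lookup_sum lookup_single when_def ..

lemma sum_lessThan_delta2:
  fixes g :: "nat \<Rightarrow> nat \<Rightarrow> 'a::comm_monoid_add"
  assumes "x < n" "y < n"
  shows "(\<Sum>i<n. \<Sum>j<n. if i = x \<and> j = y then g i j else 0) = g x y"
proof -
  have "(\<Sum>i<n. \<Sum>j<n. if i = x \<and> j = y then g i j else 0)
      = (\<Sum>i<n. if i = x then (\<Sum>j<n. if j = y then g i j else 0) else 0)"
    by (intro sum.cong refl) auto
  thus ?thesis using assms by simp
qed

lemma lookup_QG_evec_pair:
  assumes sym: "\<And>u v. u < n \<Longrightarrow> v < n \<Longrightarrow> E u v = E v u" and xy: "x < n" "y < n"
  shows "Poly_Mapping.lookup (QG n E) (evec x + evec y) = (if E x y then if x = y then 1/2 else 1 else 0)"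
proof -
  define g where "g i j = (1/2) * adj_matrix n E $$ (i,j)" for i j
  have "Poly_Mapping.lookup (QG n E) (evec x + evec y) =
      (\<Sum>i<n. \<Sum>j<n. if (i = x \<and> j = y) \<or> (i = y \<and> j = x) then g i j else 0)"
    unfolding lookup_QG g_def by (intro sum.cong refl) (simp only: evec_pair_eq_iff)
  also have "\<dots> = (if x = y then g x x else g x y + g y x)"
  proof (cases "x = y")
    case True
    thus ?thesis using sum_lessThan_delta2[OF xy, of g] by simp
  next
    case False
    hence "(\<Sum>i<n. \<Sum>j<n. if (i = x \<and> j = y) \<or> (i = y \<and> j = x) then g i j else 0)
        = (\<Sum>i<n. \<Sum>j<n. (if i = x \<and> j = y then g i j else 0) + (if i = y \<and> j = x then g i j else 0))"
      by (intro sum.cong refl) auto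
    also have "\<dots> = g x y + g y x"
      unfolding sum.distrib using sum_lessThan_delta2[OF xy, of g] sum_lessThan_delta2[OF xy(2,1), of g] by simp
    finally show ?thesis using False by simp
  qed
  finally show ?thesis
    using xy sym[OF xy] unfolding g_def adj_matrix_def by simp
qed

lemma mem_supp_QG_iff:
  assumes sym: "\<And>u v. u < n \<Longrightarrow> v < n \<Longrightarrow> E u v = E v u"
  shows "m \<in> supp (QG n E) \<longleftrightarrow> (\<exists>x<n. \<exists>y<n. m = evec x + evec y \<and> E x y)"
proof
  assume "m \<in> supp (QG n E)"
  hence nz: "Poly_Mapping.lookup (QG n E) m \<noteq> 0" unfolding supp_def by (simp add: in_keys_iff)
  have "\<exists>x<n. \<exists>y<n. m = evec x + evec y"
  proof (rule ccontr)
    assume "\<not> (\<exists>x<n. \<exists>y<n. m = evec x + evec y)"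
    hence "Poly_Mapping.lookup (QG n E) m = 0"
      unfolding lookup_QG by (intro sum.neutral ballI) auto
    with nz show False by contradiction
  qed
  then obtain x y where xy: "x < n" "y < n" "m = evec x + evec y" by blast
  with nz have "E x y"
    using lookup_QG_evec_pair[OF sym xy(1,2)] by (simp split: if_splits)
  with xy show "\<exists>x<n. \<exists>y<n. m = evec x + evec y \<and> E x y" by blast
next
  assume "\<exists>x<n. \<exists>y<n. m = evec x + evec y \<and> E x y"
  then obtain x y where xy: "x < n" "y < n" "m = evec x + evec y" "E x y" by blast
  hence "Poly_Mapping.lookup (QG n E) m \<noteq> 0"
    using lookup_QG_evec_pair[OF sym xy(1,2)] by simp
  thus "m \<in> supp (QG n E)" unfolding supp_def by (simp add: in_keys_iff)
qed

lemma evec_pair_in_supp_QG_iff: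
  assumes sym: "\<And>u v. u < n \<Longrightarrow> v < n \<Longrightarrow> E u v = E v u" and "x < n" "y < n"
  shows "evec x + evec y \<in> supp (QG n E) \<longleftrightarrow> E x y"
  using lookup_QG_evec_pair[OF assms] unfolding supp_def in_keys_iff by simp

lemma multipartite_cone_exchange:
  assumes sym: "\<And>u v. u < n \<Longrightarrow> v < n \<Longrightarrow> E u v = E v u" and cone: "multipartite_cone n E"
    and lt: "i < n" "k < n" "r < n" "s < n" and ik: "E i k" and rs: "E r s"
    and gt: "Poly_Mapping.lookup (evec r + evec s) i < Poly_Mapping.lookup (evec i + evec k) i"
  shows "\<exists>j\<in>{r, s}. Poly_Mapping.lookup (evec i + evec k) j < Poly_Mapping.lookup (evec r + evec s) j
           \<and> E k j"
proof (cases "i = k")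
  case True
  have "E k r" "E k s"
    using multipartite_cone_loop_universal[OF cone lt(2)] ik True lt by auto
  moreover have "r \<noteq> i \<or> s \<noteq> i" using gt True by (auto simp: lookup_add lookup_single when_def)
  ultimately show ?thesis using True by (auto simp: lookup_add lookup_single when_def)
next
  case False
  hence ri: "r \<noteq> i" and si: "s \<noteq> i" using gt by (auto simp: lookup_add lookup_single when_def split: if_splits)
  consider "r = s" | "r \<noteq> s" "k = r" | "r \<noteq> s" "k = s" | "r \<noteq> s" "k \<noteq> r" "k \<noteq> s"
    by blast
  thus ?thesis
  proof cases
    case 1
    have "E k r"
      using multipartite_cone_loop_universal[OF cone lt(3) _ lt(2)] rs 1 sym[OF lt(2,3)] by simp
    thus ?thesis using 1 ri by (auto simp: lookup_add lookup_single when_def)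
  next
    case 2
    thus ?thesis using rs ri si by (auto simp: lookup_add lookup_single when_def)
  next
    case 3
    thus ?thesis using rs ri si sym[OF lt(3,4)] by (auto simp: lookup_add lookup_single when_def)
  next
    case 4
    have "E k r \<or> E k s"
    proof (rule ccontr)
      assume "\<not> (E k r \<or> E k s)"
      moreover from this have "\<not> E k k" "\<not> E r r" "\<not> E s s"
        using multipartite_cone_loop_universal[OF cone] sym lt by blast+
      ultimately have "\<not> E r s" using multipartite_cone_nonadj_trans[OF cone lt(2,3,4)] by blast
      with rs show False by contradiction
    qed
    thus ?thesis using 4 ri si by (auto simp: lookup_add lookup_single when_def)
  qed
qed

lemma M_convex_supp_QG_iff:
  assumes sym: "\<And>u v. u < n \<Longrightarrow> v < n \<Longrightarrow> E u v = E v u"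
    and no_isolated: "\<And>v. v < n \<Longrightarrow> \<exists>u<n. E v u"
  shows "M_convex (supp (QG n E)) \<longleftrightarrow> multipartite_cone n E"
proof
  let ?S = "supp (QG n E)"
  have mem: "\<And>x y. x < n \<Longrightarrow> y < n \<Longrightarrow> evec x + evec y \<in> ?S \<longleftrightarrow> E x y"
    using evec_pair_in_supp_QG_iff[where n = n and E = E, OF sym] by blast
  assume MC: "M_convex ?S"
  have exchange: "\<exists>j. Poly_Mapping.lookup a j < Poly_Mapping.lookup b j \<and> a - evec i + evec j \<in> ?S"
    if "a \<in> ?S" "b \<in> ?S" "Poly_Mapping.lookup b i < Poly_Mapping.lookup a i" for a b i
    using MC that unfolding M_convex_def by blast
  show "multipartite_cone n E"
    unfolding multipartite_cone_def
  proof (intro conjI allI impI)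
    fix v u assume v: "v < n" "E v v" and u: "u < n"
    obtain t where t: "t < n" "E u t" using no_isolated[OF u] by blast
    show "E v u"
    proof (cases "t = v")
      case True
      thus ?thesis using t sym[OF u v(1)] by simp
    next
      case False
      have "evec t + evec u \<in> ?S" "evec v + evec v \<in> ?S"
        using mem t u v sym[OF u t(1)] by simp_all
      moreover have "Poly_Mapping.lookup (evec v + evec v) t < Poly_Mapping.lookup (evec t + evec u) t"
        using False by (simp add: lookup_add lookup_single when_def)
      ultimately obtain j where
        "Poly_Mapping.lookup (evec t + evec u) j < Poly_Mapping.lookup (evec v + evec v) j"
        and "evec t + evec u - evec t + evec j \<in> ?S"
        by (blast dest: exchange)
      hence "j = v" "evec u + evec j \<in> ?S"
        by (auto simp: lookup_add lookup_single when_def split: if_splits)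
      thus "E v u" using mem[OF u v(1)] sym[OF u v(1)] by simp
    qed
  next
    fix c a b assume lt: "c < n" "a < n" "b < n"
      and "\<not> E c c" "\<not> E a a" "\<not> E b b" and ca: "\<not> E c a" and cb: "\<not> E c b"
    show "\<not> E a b"
    proof
      assume ab: "E a b"
      obtain t where t: "t < n" "E c t" using no_isolated[OF lt(1)] by blast
      have "t \<noteq> a" "t \<noteq> b" using t ca cb by auto
      have "evec t + evec c \<in> ?S" "evec a + evec b \<in> ?S"
        using mem t lt ab sym[OF lt(1) t(1)] by simp_all
      moreover have "Poly_Mapping.lookup (evec a + evec b) t < Poly_Mapping.lookup (evec t + evec c) t"
        using \<open>t \<noteq> a\<close> \<open>t \<noteq> b\<close> by (simp add: lookup_add lookup_single when_def)
      ultimately obtain j where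
        "Poly_Mapping.lookup (evec t + evec c) j < Poly_Mapping.lookup (evec a + evec b) j"
        and "evec t + evec c - evec t + evec j \<in> ?S"
        by (blast dest: exchange)
      hence "j = a \<or> j = b" "evec c + evec j \<in> ?S"
        by (auto simp: lookup_add lookup_single when_def split: if_splits)
      thus False using mem lt ca cb by auto
    qed
  qed
next
  assume cone: "multipartite_cone n E"
  show "M_convex (supp (QG n E))"
    unfolding M_convex_def
  proof (intro ballI allI impI)
    fix a b i
    assume a: "a \<in> supp (QG n E)" and b: "b \<in> supp (QG n E)"
      and gt: "Poly_Mapping.lookup b i < Poly_Mapping.lookup a i"
    obtain p q where pq: "p < n" "q < n" "a = evec p + evec q" "E p q"
      using a by (auto simp: mem_supp_QG_iff[where n = n and E = E, OF sym])
    obtain r s where rs: "r < n" "s < n" "b = evec r + evec s" "E r s"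
      using b by (auto simp: mem_supp_QG_iff[where n = n and E = E, OF sym])
    obtain k where k: "k < n" "a = evec i + evec k" "E i k" "i < n"
    proof (cases "i = p")
      case True
      thus ?thesis using that pq by blast
    next
      case False
      hence "i = q" using gt pq(3) by (auto simp: lookup_add lookup_single when_def split: if_splits)
      thus ?thesis using that[of p] pq sym[OF pq(1,2)] by (simp add: add.commute)
    qed
    from multipartite_cone_exchange[OF sym cone k(4) k(1) rs(1,2) k(3) rs(4)] gt
    obtain j where "j \<in> {r, s}" "Poly_Mapping.lookup a j < Poly_Mapping.lookup b j" "E k j"
      unfolding k(2) rs(3) by blast
    moreover have "a - evec i + evec j \<in> supp (QG n E)"
      using k \<open>j \<in> {r, s}\<close> rs \<open>E k j\<close> mem_supp_QG_iff[where n = n and E = E, OF sym] by auto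
    ultimately show "\<exists>j. Poly_Mapping.lookup a j < Poly_Mapping.lookup b j \<and> a - evec i + evec j \<in> supp (QG n E)"
      by blast
  qed
qed

section \<open>The Hessian of Q_G\<close>

lemma lookup_mpderiv:
  "Poly_Mapping.lookup (mpderiv i f) m
     = of_nat (Poly_Mapping.lookup m i + 1) * Poly_Mapping.lookup f (m + evec i)"
proof -
  have "{m. of_nat (Poly_Mapping.lookup m i + 1) * Poly_Mapping.lookup f (m + evec i) \<noteq> (0::real)}
        \<subseteq> (\<lambda>m. m + evec i) -` Poly_Mapping.keys f"
    by (auto simp: in_keys_iff)
  moreover have "finite ((\<lambda>m. m + evec i) -` Poly_Mapping.keys f)"
    by (rule finite_vimageI) (auto simp: inj_on_def)
  ultimately show ?thesis
    unfolding mpderiv_def by (subst lookup_Abs_poly_mapping) (auto dest: finite_subset)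
qed

lemma hessian_QG:
  assumes sym: "\<And>u v. u < n \<Longrightarrow> v < n \<Longrightarrow> E u v = E v u"
  shows "hessian n (QG n E) = adj_matrix n E"
proof (rule eq_matI)
  fix i j assume "i < dim_row (adj_matrix n E)" "j < dim_col (adj_matrix n E)"
  hence ij: "i < n" "j < n" unfolding adj_matrix_def by auto
  have "hessian n (QG n E) $$ (i,j)
      = of_nat (Poly_Mapping.lookup (evec i) j + 1) * Poly_Mapping.lookup (QG n E) (evec i + evec j)"
    unfolding hessian_def using ij by (simp add: lookup_mpderiv)
  also have "\<dots> = adj_matrix n E $$ (i,j)"
    using ij lookup_QG_evec_pair[where n = n and E = E, OF sym ij]
    by (simp add: lookup_single adj_matrix_def)
  finally show "hessian n (QG n E) $$ (i,j) = adj_matrix n E $$ (i,j)" .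
qed (auto simp: hessian_def adj_matrix_def)

lemma lorentzian_QG_iff:
  assumes sym: "\<And>u v. u < n \<Longrightarrow> v < n \<Longrightarrow> E u v = E v u"
  shows "lorentzian n 2 (QG n E) \<longleftrightarrow> antiferromagnetic n E"
proof -
  have keys: "Poly_Mapping.keys (evec x + evec y) = {x, y}" for x y
    by (auto simp: in_keys_iff lookup_add lookup_single when_def split: if_splits)
  have mdeg: "mdeg (evec x + evec y) = 2" for x y
    unfolding mdeg_def keys by (cases "x = y") (simp_all add: lookup_add lookup_single)
  have "in_vars n (QG n E)"
    unfolding in_vars_def by (auto simp: mem_supp_QG_iff[OF sym] keys simp del: One_nat_def)
  moreover have "homogeneous 2 (QG n E)"
    unfolding homogeneous_def using mdeg by (auto simp: mem_supp_QG_iff[OF sym] simp del: One_nat_def)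
  moreover have "nonneg_coeffs (QG n E)"
    unfolding nonneg_coeffs_def by (auto simp: lookup_QG adj_matrix_def intro!: sum_nonneg)
  ultimately show ?thesis
    by (simp add: numeral_2_eq_2 hessian_QG[OF sym] antiferromagnetic_def)
qed

section \<open>The quadratic form of the adjacency matrix\<close>

lemma adj_matrix_carrier: "adj_matrix n E \<in> carrier_mat n n"
  unfolding adj_matrix_def by simp

lemma adj_matrix_index: "i < n \<Longrightarrow> j < n \<Longrightarrow> adj_matrix n E $$ (i,j) = (if E i j then 1 else 0)"
  unfolding adj_matrix_def by simp

lemma adj_matrix_symmetric:
  assumes sym: "\<And>u v. u < n \<Longrightarrow> v < n \<Longrightarrow> E u v = E v u"
  shows "transpose_mat (adj_matrix n E) = adj_matrix n E"
  by (rule eq_matI) (auto simp: adj_matrix_def sym)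

lemma bilin_form_supported:
  assumes S: "S \<subseteq> {..<n}" and f: "\<And>k. k \<notin> S \<Longrightarrow> f k = 0"
    and T: "T \<subseteq> {..<n}" and g: "\<And>k. k \<notin> T \<Longrightarrow> g k = 0"
  shows "bilin_form A n f g = (\<Sum>i\<in>S. \<Sum>j\<in>T. A $$ (i,j) * f i * g j)"
proof -
  have "bilin_form A n f g = (\<Sum>i\<in>S. \<Sum>j<n. A $$ (i,j) * f i * g j)"
    unfolding bilin_form_def by (rule sum.mono_neutral_right) (use S f in auto)
  also have "\<dots> = (\<Sum>i\<in>S. \<Sum>j\<in>T. A $$ (i,j) * f i * g j)"
    by (intro sum.cong refl sum.mono_neutral_right) (use T g in auto)
  finally show ?thesis .
qed

lemma adj_nonpos_on_hyperplane_loop_universal: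
  assumes sym: "\<And>u v. u < n \<Longrightarrow> v < n \<Longrightarrow> E u v = E v u"
    and hyp: "nonpos_on_hyperplane (adj_matrix n E) n"
    and lt: "v < n" "u < n" "t < n" and vv: "E v v" and ut: "E u t"
  shows "E v u"
proof (rule ccontr)
  assume vu: "\<not> E v u"
  let ?A = "adj_matrix n E"
  note A = adj_matrix_carrier adj_matrix_symmetric[OF sym]
  have uv: "u \<noteq> v" using vv vu by auto
  define X where "X k = (if k = v then 1 else 0 :: real)" for k
  have X: "{v} \<subseteq> {..<n}" "\<And>k. k \<notin> {v} \<Longrightarrow> X k = 0" using lt unfolding X_def by auto
  have qX: "quad_form ?A n X = 1"
    by (subst bilin_form_supported[OF X X]) (insert lt vv, simp_all add: X_def adj_matrix_index)
  show False
  proof (cases "t = u")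
    case True
    define Y where "Y k = (if k = u then 1 else 0 :: real)" for k
    have Y: "{u} \<subseteq> {..<n}" "\<And>k. k \<notin> {u} \<Longrightarrow> Y k = 0" using lt unfolding Y_def by auto
    have "quad_form ?A n Y = 1"
      by (subst bilin_form_supported[OF Y Y]) (insert lt ut True, simp_all add: Y_def adj_matrix_index)
    moreover have "bilin_form ?A n X Y = 0"
      by (subst bilin_form_supported[OF X Y]) (insert lt vu, simp_all add: X_def Y_def adj_matrix_index)
    ultimately have "\<not> nonpos_on_hyperplane ?A n"
      using qX by (intro not_nonpos_on_hyperplane[OF A, where X = X and Y = Y]) simp_all
    with hyp show False by contradiction
  next
    case False
    have tv: "t \<noteq> v" using vu ut sym[OF lt(2,1)] by auto
    define Y where "Y k = (if k = u then 1 else 0) + (if k = t then 1 else 0 :: real)" for k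
    have Y: "{u, t} \<subseteq> {..<n}" "\<And>k. k \<notin> {u, t} \<Longrightarrow> Y k = 0" using lt unfolding Y_def by auto
    have "quad_form ?A n Y = 2 + (if E u u then 1 else 0) + (if E t t then 1 else 0)"
      by (subst bilin_form_supported[OF Y Y])
        (insert lt ut False sym[OF lt(2,3)], simp_all add: Y_def adj_matrix_index)
    moreover have "bilin_form ?A n X Y = (if E v t then 1 else 0)"
      by (subst bilin_form_supported[OF X Y])
        (insert lt vu False tv uv, simp_all add: X_def Y_def adj_matrix_index)
    ultimately have "\<not> nonpos_on_hyperplane ?A n"
      using qX by (intro not_nonpos_on_hyperplane[OF A, where X = X and Y = Y]) (simp_all add: power2_eq_square)
    with hyp show False by contradiction
  qed
qed

lemma adj_nonpos_on_hyperplane_nonadj_trans: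
  assumes sym: "\<And>u v. u < n \<Longrightarrow> v < n \<Longrightarrow> E u v = E v u"
    and hyp: "nonpos_on_hyperplane (adj_matrix n E) n"
    and lt: "c < n" "a < n" "b < n" "t < n" and loops: "\<not> E c c" "\<not> E a a" "\<not> E b b"
    and ca: "\<not> E c a" and cb: "\<not> E c b" and ct: "E c t"
  shows "\<not> E a b"
proof
  assume ab: "E a b"
  let ?A = "adj_matrix n E"
  note A = adj_matrix_carrier adj_matrix_symmetric[OF sym]
  have d: "a \<noteq> b" "c \<noteq> a" "c \<noteq> b" "t \<noteq> a" "t \<noteq> b" "t \<noteq> c"
    using loops ca cb ab ct sym[OF lt(2,3)] by auto
  define X where "X k = (if k = a then 1 else 0) + (if k = b then 1 else 0 :: real)" for k
  define Y where "Y k = (if k = c then 2 else 0) + (if k = t then 1 else 0 :: real)" for k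
  have X: "{a, b} \<subseteq> {..<n}" "\<And>k. k \<notin> {a, b} \<Longrightarrow> X k = 0" using lt unfolding X_def by auto
  have Y: "{c, t} \<subseteq> {..<n}" "\<And>k. k \<notin> {c, t} \<Longrightarrow> Y k = 0" using lt unfolding Y_def by auto
  have "quad_form ?A n X = 2"
    by (subst bilin_form_supported[OF X X])
      (insert lt d loops ab sym[OF lt(2,3)], simp_all add: X_def adj_matrix_index)
  moreover have "quad_form ?A n Y = 4 + (if E t t then 1 else 0)"
    by (subst bilin_form_supported[OF Y Y])
      (insert lt d loops ct sym[OF lt(1,4)], simp_all add: Y_def adj_matrix_index)
  moreover have "bilin_form ?A n X Y = (if E a t then 1 else 0) + (if E b t then 1 else 0)"
    by (subst bilin_form_supported[OF X Y])
      (insert lt d ca cb sym[OF lt(2,1)] sym[OF lt(3,1)], simp_all add: X_def Y_def adj_matrix_index)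
  ultimately have "\<not> nonpos_on_hyperplane ?A n"
    by (intro not_nonpos_on_hyperplane[OF A, where X = X and Y = Y]) (simp_all add: power2_eq_square)
  with hyp show False by contradiction
qed

lemma equiv_sum_products_nonneg:
  fixes f :: "'a \<Rightarrow> real"
  assumes R: "equiv V R" and V: "finite V"
  shows "0 \<le> (\<Sum>i\<in>V. \<Sum>j\<in>V. if (i, j) \<in> R then f i * f j else 0)"
proof -
  have "(\<Sum>j\<in>V. if (i, j) \<in> R then f i * f j else 0) = f i * (\<Sum>j\<in>X. f j)"
    if "X \<in> V // R" "i \<in> X" for X i
  proof -
    have "X = R `` {i}" using R that by (metis Image_singleton_iff equiv_class_eq quotientE)
    hence "{j \<in> V. (i, j) \<in> R} = X" using R by (auto dest: equiv_type)
    thus ?thesis using V by (simp add: sum.If_cases sum_distrib_left Int_def)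
  qed
  hence "(\<Sum>i\<in>V. \<Sum>j\<in>V. if (i, j) \<in> R then f i * f j else 0) = (\<Sum>X\<in>V // R. (\<Sum>i\<in>X. f i)\<^sup>2)"
    by (simp add: sum.partition[OF V partition_on_quotient[OF R]] power2_eq_square sum_distrib_right
        cong: sum.cong)
  thus ?thesis by (simp add: sum_nonneg)
qed

lemma multipartite_cone_nonpos_on_hyperplane:
  assumes sym: "\<And>u v. u < n \<Longrightarrow> v < n \<Longrightarrow> E u v = E v u" and cone: "multipartite_cone n E"
  shows "nonpos_on_hyperplane (adj_matrix n E) n"
proof -
  define L where "L = {v. v < n \<and> \<not> E v v}"
  define R where "R = nonadj_rel E L"
  have R: "equiv L R"
    unfolding L_def R_def by (rule multipartite_cone_equiv_loopless[OF sym cone])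
  have L: "L \<subseteq> {..<n}" unfolding L_def by auto
  have entry: "adj_matrix n E $$ (i,j) = 1 - (if (i, j) \<in> R then 1 else 0)" if "i < n" "j < n" for i j
    using that multipartite_cone_loop_universal[OF cone] sym[OF that]
    unfolding R_def L_def nonadj_rel_def by (auto simp: adj_matrix_index)
  show ?thesis unfolding nonpos_on_hyperplane_def
  proof (intro exI[of _ "\<lambda>_. 1"] allI impI)
    fix f :: "nat \<Rightarrow> real" assume f: "(\<Sum>i<n. 1 * f i) = 0"
    have "quad_form (adj_matrix n E) n f
        = (\<Sum>i<n. \<Sum>j<n. f i * f j - (if (i, j) \<in> R then f i * f j else 0))"
      unfolding bilin_form_def by (intro sum.cong refl) (simp add: entry)
    also have "\<dots> = (\<Sum>i<n. f i) * (\<Sum>j<n. f j) - (\<Sum>i<n. \<Sum>j<n. if (i, j) \<in> R then f i * f j else 0)"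
      by (simp add: sum_subtractf sum_product)
    also have "(\<Sum>i<n. \<Sum>j<n. if (i, j) \<in> R then f i * f j else 0)
        = (\<Sum>i\<in>L. \<Sum>j\<in>L. if (i, j) \<in> R then f i * f j else 0)"
    proof -
      have out: "(i, j) \<notin> R" if "i \<notin> L \<or> j \<notin> L" for i j
        using equiv_type[OF R] that by blast
      have "(\<Sum>i<n. \<Sum>j<n. if (i, j) \<in> R then f i * f j else 0)
          = (\<Sum>i\<in>L. \<Sum>j<n. if (i, j) \<in> R then f i * f j else 0)"
        by (rule sum.mono_neutral_right) (use L out in auto)
      also have "\<dots> = (\<Sum>i\<in>L. \<Sum>j\<in>L. if (i, j) \<in> R then f i * f j else 0)"
        by (intro sum.cong refl sum.mono_neutral_right) (use L out in auto)
      finally show ?thesis .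
    qed
    finally show "quad_form (adj_matrix n E) n f \<le> 0"
      using f equiv_sum_products_nonneg[OF R finite_subset[OF L finite_lessThan]] by simp
  qed
qed

lemma adj_nonpos_on_hyperplane_iff_multipartite_cone:
  assumes sym: "\<And>u v. u < n \<Longrightarrow> v < n \<Longrightarrow> E u v = E v u"
    and no_isolated: "\<And>v. v < n \<Longrightarrow> \<exists>u<n. E v u"
  shows "nonpos_on_hyperplane (adj_matrix n E) n \<longleftrightarrow> multipartite_cone n E"
proof
  assume hyp: "nonpos_on_hyperplane (adj_matrix n E) n"
  show "multipartite_cone n E"
    unfolding multipartite_cone_def
  proof (intro conjI allI impI)
    fix v u assume "v < n" "E v v" "u < n"
    with no_isolated[OF \<open>u < n\<close>] show "E v u"
      using adj_nonpos_on_hyperplane_loop_universal[OF sym hyp] by blast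
  next
    fix c a b assume "c < n" "a < n" "b < n" "\<not> E c c" "\<not> E a a" "\<not> E b b" "\<not> E c a" "\<not> E c b"
    with no_isolated[OF \<open>c < n\<close>] show "\<not> E a b"
      using adj_nonpos_on_hyperplane_nonadj_trans[OF sym hyp] by blast
  qed
qed (rule multipartite_cone_nonpos_on_hyperplane[OF sym])

theorem theorem3p2:
  fixes n :: nat and E :: "nat \<Rightarrow> nat \<Rightarrow> bool"
  assumes sym: "\<And>u v. u < n \<Longrightarrow> v < n \<Longrightarrow> E u v = E v u"
    and no_isolated: "\<And>v. v < n \<Longrightarrow> \<exists>u<n. E v u"
  shows "(antiferromagnetic n E \<longleftrightarrow> lorentzian n 2 (QG n E))
       \<and> (lorentzian n 2 (QG n E) \<longleftrightarrow> M_convex (supp (QG n E)))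
       \<and> (M_convex (supp (QG n E)) \<longleftrightarrow>
           (\<exists>V1 V2. V1 \<inter> V2 = {} \<and> V1 \<union> V2 = {0..<n}
              \<and> induces_complete_multipartite E V1
              \<and> (\<forall>v\<in>V2. E v v \<and> (\<forall>u<n. E v u))))"
proof -
  have "antiferromagnetic n E \<longleftrightarrow> nonpos_on_hyperplane (adj_matrix n E) n"
    unfolding antiferromagnetic_def
    by (rule at_most_one_pos_eig_iff_nonpos_on_hyperplane[OF adj_matrix_carrier adj_matrix_symmetric])
      (rule sym)
  also have "\<dots> \<longleftrightarrow> multipartite_cone n E"
    by (rule adj_nonpos_on_hyperplane_iff_multipartite_cone) (use sym no_isolated in auto)
  finally have AF: "antiferromagnetic n E \<longleftrightarrow> multipartite_cone n E" .
  have L: "lorentzian n 2 (QG n E) \<longleftrightarrow> antiferromagnetic n E"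
    by (rule lorentzian_QG_iff) (rule sym)
  have M: "M_convex (supp (QG n E)) \<longleftrightarrow> multipartite_cone n E"
    by (rule M_convex_supp_QG_iff) (use sym no_isolated in auto)
  have P: "multipartite_cone n E \<longleftrightarrow>
      (\<exists>V1 V2. V1 \<inter> V2 = {} \<and> V1 \<union> V2 = {0..<n} \<and> induces_complete_multipartite E V1
         \<and> (\<forall>v\<in>V2. E v v \<and> (\<forall>u<n. E v u)))"
    by (rule multipartite_cone_iff_partition) (rule sym)
  show ?thesis using AF L M P by blast
qed

end
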